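(* Let $\mathbb{C}$ be a cartesian monoidal category and $T$ an observational commutative monad on $\mathbb{C}$ such that for every object $Y$ the pair $\eta_{TY},T\eta_Y:TY\to TTY$ has an equalizer $\theta_Y:DY\to TY$. Then for all objects $X,Y$, composition with $\theta_Y$ gives a bijection between morphisms $X\to DY$ in $\mathbb{C}$ and deterministic Kleisli morphisms $X\rightsquigarrow Y$ of $\mathsf{Kl}(T)$ (i.e. $f:X\rightsquigarrow Y$ is deterministic iff $f^\sharp$ factors, necessarily uniquely, through $\theta_Y$); thus the submonad $D$ of $T$ has as Kleisli morphisms exactly the deterministic morphisms of $\mathsf{Kl}(T)$.
   Context: $\mathbb{C}$ has finite products; $T=(T,\eta,\mu)$ is a commutative monad with monoidal structure $\nabla_{A,B}:TA\times TB\to T(A\times B)$. $\mathsf{Kl}(T)$: morphisms $f:A\rightsquigarrow B$ correspond to $f^\sharp:A\to TB$, composition $(g\circledcirc f)^\sharp=\mu\circ T(g^\sharp)\circ f^\sharp$, identities $\eta$; tensor $\otimes$ is $\times$ on objects and $(f\otimes g)^\sharp=\nabla\circ(f^\sharp\times g^\sharp)$. $\mathsf{copy}_X^\sharp=\eta\circ\Delta_X$, $\mathsf{del}_X^\sharp=\eta\circ !_X$. A Kleisli morphism $f:X\rightsquigarrow Y$ is deterministic if $\mathsf{copy}_Y\circledcirc f=(f\otimes f)\circledcirc\mathsf{copy}_X$ and $\mathsf{del}_Y\circledcirc f=\mathsf{del}_X$. $\mathsf{force}_A:TA\rightsquigarrow A$ has $\mathsf{force}_A^\sharp=1_{TA}$;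 $\mathsf{copy}_n:TX\rightsquigarrow(TX)^{\otimes n}$ has $\mathsf{copy}_n^\sharp=\eta\circ\Delta_n$ with $\Delta_n$ the $n$-fold diagonal; $\mathsf{samp}_n=\mathsf{force}^{\otimes n}\circledcirc\mathsf{copy}_n:TX\rightsquigarrow X^{\otimes n}$. $T$ is observational if for every $X$ the family $(\mathsf{samp}_n)_{n\in\mathbb{N}}$ is jointly monic in $\mathsf{Kl}(T)$. The object $D Y$ becomes a monad $D$ (a submonad of $T$ via $\theta$): for $g:Y\to Z$... more precisely, its unit $e_X:X\to DX$ is the unique map with $\theta_X\circ e_X=\eta_X$, and its Kleisli morphisms $X\to DY$ are identified, via $h\mapsto(\theta_Y\circ h)^\flat$, with Kleisli morphisms of $T$. *)

theory Defs
  imports Main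
begin

text \<open>A category is presented by a set of objects, hom-sets, composition
  (written cmp g f for "g after f") and identities.\<close>

record ('o, 'm) cartcat =
  Ob   :: "'o set"
  Hom  :: "'o \<Rightarrow> 'o \<Rightarrow> 'm set"
  cmp  :: "'m \<Rightarrow> 'm \<Rightarrow> 'm"
  idt  :: "'o \<Rightarrow> 'm"
  one  :: "'o"
  bang :: "'o \<Rightarrow> 'm"
  prd  :: "'o \<Rightarrow> 'o \<Rightarrow> 'o"
  pr1  :: "'o \<Rightarrow> 'o \<Rightarrow> 'm"
  pr2  :: "'o \<Rightarrow> 'o \<Rightarrow> 'm"
  tup  :: "'m \<Rightarrow> 'm \<Rightarrow> 'm"

definition is_category :: "('o, 'm) cartcat \<Rightarrow> bool" where
  "is_category C \<longleftrightarrow>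
     (\<forall>A B. Hom C A B \<noteq> {} \<longrightarrow> A \<in> Ob C \<and> B \<in> Ob C) \<and>
     (\<forall>A\<in>Ob C. idt C A \<in> Hom C A A) \<and>
     (\<forall>A B E f g. f \<in> Hom C A B \<longrightarrow> g \<in> Hom C B E \<longrightarrow> cmp C g f \<in> Hom C A E) \<and>
     (\<forall>A B f. f \<in> Hom C A B \<longrightarrow> cmp C (idt C B) f = f \<and> cmp C f (idt C A) = f) \<and>
     (\<forall>A B E F f g h. f \<in> Hom C A B \<longrightarrow> g \<in> Hom C B E \<longrightarrow> h \<in> Hom C E F \<longrightarrow>
         cmp C h (cmp C g f) = cmp C (cmp C h g) f)"

definition is_cartesian_category :: "('o, 'm) cartcat \<Rightarrow> bool" where
  "is_cartesian_category C \<longleftrightarrow> is_category C \<and>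
     one C \<in> Ob C \<and>
     (\<forall>A\<in>Ob C. bang C A \<in> Hom C A (one C)) \<and>
     (\<forall>A f. f \<in> Hom C A (one C) \<longrightarrow> f = bang C A) \<and>
     (\<forall>A\<in>Ob C. \<forall>B\<in>Ob C. prd C A B \<in> Ob C \<and>
         pr1 C A B \<in> Hom C (prd C A B) A \<and> pr2 C A B \<in> Hom C (prd C A B) B) \<and>
     (\<forall>X A B f g. f \<in> Hom C X A \<longrightarrow> g \<in> Hom C X B \<longrightarrow>
         tup C f g \<in> Hom C X (prd C A B) \<and>
         cmp C (pr1 C A B) (tup C f g) = f \<and> cmp C (pr2 C A B) (tup C f g) = g) \<and>
     (\<forall>X A B h. A \<in> Ob C \<longrightarrow> B \<in> Ob C \<longrightarrow> h \<in> Hom C X (prd C A B) \<longrightarrow>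
         h = tup C (cmp C (pr1 C A B) h) (cmp C (pr2 C A B) h))"

definition fprod :: "('o, 'm) cartcat \<Rightarrow> 'o \<Rightarrow> 'o \<Rightarrow> 'm \<Rightarrow> 'm \<Rightarrow> 'm" where
  "fprod C A B f g = tup C (cmp C f (pr1 C A B)) (cmp C g (pr2 C A B))"

definition diag :: "('o, 'm) cartcat \<Rightarrow> 'o \<Rightarrow> 'm" where
  "diag C A = tup C (idt C A) (idt C A)"

definition assoc :: "('o, 'm) cartcat \<Rightarrow> 'o \<Rightarrow> 'o \<Rightarrow> 'o \<Rightarrow> 'm" where
  "assoc C A B E = tup C (cmp C (pr1 C A B) (pr1 C (prd C A B) E))
     (tup C (cmp C (pr2 C A B) (pr1 C (prd C A B) E)) (pr2 C (prd C A B) E))"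

definition swap :: "('o, 'm) cartcat \<Rightarrow> 'o \<Rightarrow> 'o \<Rightarrow> 'm" where
  "swap C A B = tup C (pr2 C A B) (pr1 C A B)"

primrec opow :: "('o, 'm) cartcat \<Rightarrow> 'o \<Rightarrow> nat \<Rightarrow> 'o" where
  "opow C X 0 = one C"
| "opow C X (Suc n) = prd C (opow C X n) X"

primrec ndiag :: "('o, 'm) cartcat \<Rightarrow> 'o \<Rightarrow> nat \<Rightarrow> 'm" where
  "ndiag C X 0 = bang C X"
| "ndiag C X (Suc n) = tup C (ndiag C X n) (idt C X)"

record ('o, 'm) cmonad =
  Tob   :: "'o \<Rightarrow> 'o"
  Tar   :: "'m \<Rightarrow> 'm"
  eta   :: "'o \<Rightarrow> 'm"
  mu    :: "'o \<Rightarrow> 'm"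
  nabla :: "'o \<Rightarrow> 'o \<Rightarrow> 'm"

definition is_monad :: "('o, 'm) cartcat \<Rightarrow> ('o, 'm) cmonad \<Rightarrow> bool" where
  "is_monad C M \<longleftrightarrow>
     (\<forall>A\<in>Ob C. Tob M A \<in> Ob C) \<and>
     (\<forall>A B f. f \<in> Hom C A B \<longrightarrow> Tar M f \<in> Hom C (Tob M A) (Tob M B)) \<and>
     (\<forall>A\<in>Ob C. Tar M (idt C A) = idt C (Tob M A)) \<and>
     (\<forall>A B E f g. f \<in> Hom C A B \<longrightarrow> g \<in> Hom C B E \<longrightarrow>
         Tar M (cmp C g f) = cmp C (Tar M g) (Tar M f)) \<and>
     (\<forall>A\<in>Ob C. eta M A \<in> Hom C A (Tob M A)) \<and>
     (\<forall>A\<in>Ob C. mu M A \<in> Hom C (Tob M (Tob M A)) (Tob M A)) \<and>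
     (\<forall>A B f. f \<in> Hom C A B \<longrightarrow> cmp C (Tar M f) (eta M A) = cmp C (eta M B) f) \<and>
     (\<forall>A B f. f \<in> Hom C A B \<longrightarrow>
         cmp C (Tar M f) (mu M A) = cmp C (mu M B) (Tar M (Tar M f))) \<and>
     (\<forall>A\<in>Ob C. cmp C (mu M A) (eta M (Tob M A)) = idt C (Tob M A)) \<and>
     (\<forall>A\<in>Ob C. cmp C (mu M A) (Tar M (eta M A)) = idt C (Tob M A)) \<and>
     (\<forall>A\<in>Ob C. cmp C (mu M A) (Tar M (mu M A)) = cmp C (mu M A) (mu M (Tob M A)))"

text \<open>Commutative monad: a monad whose monoidal structure nabla makes it a
  symmetric monoidal monad with respect to the cartesian structure
  (naturality, associativity, unit laws, symmetry, compatibility with eta, mu).\<close>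

definition is_commutative_monad :: "('o, 'm) cartcat \<Rightarrow> ('o, 'm) cmonad \<Rightarrow> bool" where
  "is_commutative_monad C M \<longleftrightarrow> is_monad C M \<and>
     (\<forall>A\<in>Ob C. \<forall>B\<in>Ob C. nabla M A B \<in>
         Hom C (prd C (Tob M A) (Tob M B)) (Tob M (prd C A B))) \<and>
     (\<forall>A A' B B' f g. f \<in> Hom C A A' \<longrightarrow> g \<in> Hom C B B' \<longrightarrow>
         cmp C (Tar M (fprod C A B f g)) (nabla M A B) =
         cmp C (nabla M A' B') (fprod C (Tob M A) (Tob M B) (Tar M f) (Tar M g))) \<and>
     (\<forall>A\<in>Ob C. \<forall>B\<in>Ob C.
         cmp C (nabla M A B) (fprod C A B (eta M A) (eta M B)) = eta M (prd C A B)) \<and>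
     (\<forall>A\<in>Ob C. \<forall>B\<in>Ob C.
         cmp C (nabla M A B) (fprod C (Tob M (Tob M A)) (Tob M (Tob M B)) (mu M A) (mu M B)) =
         cmp C (mu M (prd C A B))
           (cmp C (Tar M (nabla M A B)) (nabla M (Tob M A) (Tob M B)))) \<and>
     (\<forall>A\<in>Ob C. \<forall>B\<in>Ob C. \<forall>E\<in>Ob C.
         cmp C (Tar M (assoc C A B E))
           (cmp C (nabla M (prd C A B) E)
              (fprod C (prd C (Tob M A) (Tob M B)) (Tob M E) (nabla M A B) (idt C (Tob M E)))) =
         cmp C (nabla M A (prd C B E))
           (cmp C (fprod C (Tob M A) (prd C (Tob M B) (Tob M E)) (idt C (Tob M A)) (nabla M B E))
              (assoc C (Tob M A) (Tob M B) (Tob M E)))) \<and>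
     (\<forall>A\<in>Ob C.
         cmp C (Tar M (pr2 C (one C) A))
           (cmp C (nabla M (one C) A) (fprod C (one C) (Tob M A) (eta M (one C)) (idt C (Tob M A))))
         = pr2 C (one C) (Tob M A)) \<and>
     (\<forall>A\<in>Ob C.
         cmp C (Tar M (pr1 C A (one C)))
           (cmp C (nabla M A (one C)) (fprod C (Tob M A) (one C) (idt C (Tob M A)) (eta M (one C))))
         = pr1 C (Tob M A) (one C)) \<and>
     (\<forall>A\<in>Ob C. \<forall>B\<in>Ob C.
         cmp C (Tar M (swap C A B)) (nabla M A B) =
         cmp C (nabla M B A) (swap C (Tob M A) (Tob M B)))"

text \<open>Kleisli category Kl(T): a Kleisli morphism f : X \<leadsto> Y is represented by
  its transpose f# \<in> Hom X (T Y).\<close>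

definition kcomp :: "('o, 'm) cartcat \<Rightarrow> ('o, 'm) cmonad \<Rightarrow> 'o \<Rightarrow> 'm \<Rightarrow> 'm \<Rightarrow> 'm" where
  "kcomp C M Z g f = cmp C (mu M Z) (cmp C (Tar M g) f)"
  \<comment> \<open>(g \<circledcirc> f)# for g : Y \<leadsto> Z\<close>

definition ktensor :: "('o, 'm) cartcat \<Rightarrow> ('o, 'm) cmonad \<Rightarrow> 'o \<Rightarrow> 'o \<Rightarrow> 'o \<Rightarrow> 'o \<Rightarrow> 'm \<Rightarrow> 'm \<Rightarrow> 'm" where
  "ktensor C M A B A' B' f g = cmp C (nabla M A' B') (fprod C A B f g)"
  \<comment> \<open>(f \<otimes> g)# for f : A \<leadsto> A', g : B \<leadsto> B'\<close>

definition kcopy :: "('o, 'm) cartcat \<Rightarrow> ('o, 'm) cmonad \<Rightarrow> 'o \<Rightarrow> 'm" where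
  "kcopy C M X = cmp C (eta M (prd C X X)) (diag C X)"

definition kdel :: "('o, 'm) cartcat \<Rightarrow> ('o, 'm) cmonad \<Rightarrow> 'o \<Rightarrow> 'm" where
  "kdel C M X = cmp C (eta M (one C)) (bang C X)"

definition deterministic :: "('o, 'm) cartcat \<Rightarrow> ('o, 'm) cmonad \<Rightarrow> 'o \<Rightarrow> 'o \<Rightarrow> 'm \<Rightarrow> bool" where
  "deterministic C M X Y f \<longleftrightarrow>
     kcomp C M (prd C Y Y) (kcopy C M Y) f =
       kcomp C M (prd C Y Y) (ktensor C M X X Y Y f f) (kcopy C M X) \<and>
     kcomp C M (one C) (kdel C M Y) f = kdel C M X"

text \<open>force_A : T A \<leadsto> A with force# = id; its n-fold tensor power
  force^{\<otimes>n} : (T X)^n \<leadsto> X^n (the empty tensor is the Kleisli identity on 1);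
  copy_n and samp_n.\<close>

definition kforce :: "('o, 'm) cartcat \<Rightarrow> ('o, 'm) cmonad \<Rightarrow> 'o \<Rightarrow> 'm" where
  "kforce C M A = idt C (Tob M A)"

primrec kforce_pow :: "('o, 'm) cartcat \<Rightarrow> ('o, 'm) cmonad \<Rightarrow> 'o \<Rightarrow> nat \<Rightarrow> 'm" where
  "kforce_pow C M X 0 = eta M (one C)"
| "kforce_pow C M X (Suc n) =
     ktensor C M (opow C (Tob M X) n) (Tob M X) (opow C X n) X
       (kforce_pow C M X n) (kforce C M X)"

definition kcopy_n :: "('o, 'm) cartcat \<Rightarrow> ('o, 'm) cmonad \<Rightarrow> 'o \<Rightarrow> nat \<Rightarrow> 'm" where
  "kcopy_n C M X n = cmp C (eta M (opow C (Tob M X) n)) (ndiag C (Tob M X) n)"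

definition samp :: "('o, 'm) cartcat \<Rightarrow> ('o, 'm) cmonad \<Rightarrow> 'o \<Rightarrow> nat \<Rightarrow> 'm" where
  "samp C M X n = kcomp C M (opow C X n) (kforce_pow C M X n) (kcopy_n C M X n)"

text \<open>Observational: for every X the family samp_n : T X \<leadsto> X^n is jointly
  monic in Kl(T).\<close>

definition observational :: "('o, 'm) cartcat \<Rightarrow> ('o, 'm) cmonad \<Rightarrow> bool" where
  "observational C M \<longleftrightarrow>
     (\<forall>X\<in>Ob C. \<forall>A\<in>Ob C. \<forall>f g.
        f \<in> Hom C A (Tob M (Tob M X)) \<longrightarrow> g \<in> Hom C A (Tob M (Tob M X)) \<longrightarrow>
        (\<forall>n. kcomp C M (opow C X n) (samp C M X n) f =
             kcomp C M (opow C X n) (samp C M X n) g) \<longrightarrow> f = g)"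

definition is_equalizer :: "('o, 'm) cartcat \<Rightarrow> 'o \<Rightarrow> 'o \<Rightarrow> 'm \<Rightarrow> 'm \<Rightarrow> 'o \<Rightarrow> 'm \<Rightarrow> bool" where
  "is_equalizer C A B f g E e \<longleftrightarrow>
     E \<in> Ob C \<and> e \<in> Hom C E A \<and> cmp C f e = cmp C g e \<and>
     (\<forall>Z h. h \<in> Hom C Z A \<longrightarrow> cmp C f h = cmp C g h \<longrightarrow>
        (\<exists>!k. k \<in> Hom C Z E \<and> cmp C e k = h))"

end

theory Submission
  imports Defs
begin

(* A Kleisli map f : X ~> Y factors through theta_Y iff f# equalizes eta_TY and T eta_Y.
  Such an f# behaves like a point: any H : TY -> TZ with H o eta_Y = eta_Z o g satisfies
  H o f# = T g o f#.  Taking H = nabla o diag and H = eta_1 o ! shows that f is copyable and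
  discardable, that is, deterministic.  Conversely, for deterministic f# (and for eta_Y, which is
  deterministic) induction on n gives samp_n o f# = T(diag_n) o f#, so samp_n sends both
  eta_TY o f# and T eta_Y o f# to T(diag_n) o f#, and observationality identifies them. *)

locale category =
  fixes C :: "('o, 'm) cartcat"
  assumes category: "is_category C"
begin

lemma hom_obs: "f \<in> Hom C A B \<Longrightarrow> A \<in> Ob C \<and> B \<in> Ob C"
  using category unfolding is_category_def by (elim conjE) blast

lemma idt_hom: "A \<in> Ob C \<Longrightarrow> idt C A \<in> Hom C A A"
  using category unfolding is_category_def by (elim conjE) simp

lemma cmp_hom: "f \<in> Hom C A B \<Longrightarrow> g \<in> Hom C B E \<Longrightarrow> cmp C g f \<in> Hom C A E"
  using category unfolding is_category_def by (elim conjE) simp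

lemma idt_cmp: "f \<in> Hom C A B \<Longrightarrow> cmp C (idt C B) f = f"
  using category unfolding is_category_def by (elim conjE) simp

lemma cmp_idt: "f \<in> Hom C A B \<Longrightarrow> cmp C f (idt C A) = f"
  using category unfolding is_category_def by (elim conjE) simp

lemma cmp_assoc: "f \<in> Hom C A B \<Longrightarrow> g \<in> Hom C B E \<Longrightarrow> h \<in> Hom C E F \<Longrightarrow>
    cmp C h (cmp C g f) = cmp C (cmp C h g) f"
  using category unfolding is_category_def by (elim conjE) simp

lemma bij_betw_equalizer:
  assumes eq: "is_equalizer C A B f g E e" and f: "f \<in> Hom C A B" and g: "g \<in> Hom C A B"
  shows "bij_betw (cmp C e) (Hom C X E) {h \<in> Hom C X A. cmp C f h = cmp C g h}"
proof -
  have e: "e \<in> Hom C E A" and e_equalizes: "cmp C f e = cmp C g e"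
    using eq unfolding is_equalizer_def by simp_all
  have univ: "\<exists>!k. k \<in> Hom C Z E \<and> cmp C e k = h"
    if "h \<in> Hom C Z A" and "cmp C f h = cmp C g h" for Z h
    using eq that unfolding is_equalizer_def by simp
  have equalizes: "cmp C e k \<in> Hom C X A \<and> cmp C f (cmp C e k) = cmp C g (cmp C e k)"
    if k: "k \<in> Hom C X E" for k
    using cmp_hom[OF k e] cmp_assoc[OF k e f] cmp_assoc[OF k e g] e_equalizes by simp
  show ?thesis
    unfolding bij_betw_def
  proof
    show "inj_on (cmp C e) (Hom C X E)"
    proof (rule inj_onI)
      fix k l assume k: "k \<in> Hom C X E" and l: "l \<in> Hom C X E" and ekl: "cmp C e k = cmp C e l"
      have "\<exists>!m. m \<in> Hom C X E \<and> cmp C e m = cmp C e k"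
        using equalizes[OF k] by (intro univ) simp_all
      then show "k = l" using k l ekl by metis
    qed
    show "cmp C e ` Hom C X E = {h \<in> Hom C X A. cmp C f h = cmp C g h}"
    proof (intro equalityI subsetI)
      fix h assume "h \<in> cmp C e ` Hom C X E"
      then show "h \<in> {h \<in> Hom C X A. cmp C f h = cmp C g h}"
        using equalizes by blast
    next
      fix h assume "h \<in> {h \<in> Hom C X A. cmp C f h = cmp C g h}"
      then have "\<exists>!k. k \<in> Hom C X E \<and> cmp C e k = h"
        by (intro univ) simp_all
      then show "h \<in> cmp C e ` Hom C X E" by blast
    qed
  qed
qed

end

locale cartesian_category = category +
  assumes cartesian: "is_cartesian_category C"
begin

lemma one_ob: "one C \<in> Ob C"
  using cartesian unfolding is_cartesian_category_def by (elim conjE) blast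

lemma bang_hom: "A \<in> Ob C \<Longrightarrow> bang C A \<in> Hom C A (one C)"
  using cartesian unfolding is_cartesian_category_def by (elim conjE) blast

lemma bang_unique: "f \<in> Hom C A (one C) \<Longrightarrow> f = bang C A"
  using cartesian unfolding is_cartesian_category_def by (elim conjE) blast

lemma prd_ob: "A \<in> Ob C \<Longrightarrow> B \<in> Ob C \<Longrightarrow> prd C A B \<in> Ob C"
  using cartesian unfolding is_cartesian_category_def by (elim conjE) blast

lemma pr1_hom: "A \<in> Ob C \<Longrightarrow> B \<in> Ob C \<Longrightarrow> pr1 C A B \<in> Hom C (prd C A B) A"
  using cartesian unfolding is_cartesian_category_def by (elim conjE) blast

lemma pr2_hom: "A \<in> Ob C \<Longrightarrow> B \<in> Ob C \<Longrightarrow> pr2 C A B \<in> Hom C (prd C A B) B"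
  using cartesian unfolding is_cartesian_category_def by (elim conjE) blast

lemma tup_hom: "f \<in> Hom C X A \<Longrightarrow> g \<in> Hom C X B \<Longrightarrow> tup C f g \<in> Hom C X (prd C A B)"
  using cartesian unfolding is_cartesian_category_def by (elim conjE) blast

lemma pr1_tup: "f \<in> Hom C X A \<Longrightarrow> g \<in> Hom C X B \<Longrightarrow> cmp C (pr1 C A B) (tup C f g) = f"
  using cartesian unfolding is_cartesian_category_def by (elim conjE) blast

lemma pr2_tup: "f \<in> Hom C X A \<Longrightarrow> g \<in> Hom C X B \<Longrightarrow> cmp C (pr2 C A B) (tup C f g) = g"
  using cartesian unfolding is_cartesian_category_def by (elim conjE) blast

lemma tup_pr: "A \<in> Ob C \<Longrightarrow> B \<in> Ob C \<Longrightarrow> h \<in> Hom C X (prd C A B) \<Longrightarrow>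
    h = tup C (cmp C (pr1 C A B) h) (cmp C (pr2 C A B) h)"
  using cartesian unfolding is_cartesian_category_def by (elim conjE) blast

lemma tup_comp:
  assumes f: "f \<in> Hom C Z A" and g: "g \<in> Hom C Z B" and k: "k \<in> Hom C W Z"
  shows "cmp C (tup C f g) k = tup C (cmp C f k) (cmp C g k)"
proof -
  have A: "A \<in> Ob C" and B: "B \<in> Ob C" using f g hom_obs by blast+
  have fg: "tup C f g \<in> Hom C Z (prd C A B)" using f g tup_hom by blast
  have "cmp C (tup C f g) k =
      tup C (cmp C (pr1 C A B) (cmp C (tup C f g) k)) (cmp C (pr2 C A B) (cmp C (tup C f g) k))"
    by (rule tup_pr[OF A B cmp_hom[OF k fg]])
  also have "\<dots> = tup C (cmp C f k) (cmp C g k)"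
    using cmp_assoc[OF k fg pr1_hom[OF A B]] cmp_assoc[OF k fg pr2_hom[OF A B]]
      pr1_tup[OF f g] pr2_tup[OF f g] by simp
  finally show ?thesis .
qed

lemma fprod_hom:
  assumes f: "f \<in> Hom C A A'" and g: "g \<in> Hom C B B'"
  shows "fprod C A B f g \<in> Hom C (prd C A B) (prd C A' B')"
proof -
  have A: "A \<in> Ob C" and B: "B \<in> Ob C" using f g hom_obs by blast+
  show ?thesis unfolding fprod_def
    by (intro tup_hom cmp_hom[OF pr1_hom[OF A B] f] cmp_hom[OF pr2_hom[OF A B] g])
qed

lemma fprod_tup:
  assumes f: "f \<in> Hom C A A'" and g: "g \<in> Hom C B B'"
    and a: "a \<in> Hom C Z A" and b: "b \<in> Hom C Z B"
  shows "cmp C (fprod C A B f g) (tup C a b) = tup C (cmp C f a) (cmp C g b)"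
proof -
  have A: "A \<in> Ob C" and B: "B \<in> Ob C" using f g hom_obs by blast+
  have ab: "tup C a b \<in> Hom C Z (prd C A B)" using a b tup_hom by blast
  have "cmp C (fprod C A B f g) (tup C a b) =
      tup C (cmp C (cmp C f (pr1 C A B)) (tup C a b)) (cmp C (cmp C g (pr2 C A B)) (tup C a b))"
    unfolding fprod_def
    by (rule tup_comp[OF cmp_hom[OF pr1_hom[OF A B] f] cmp_hom[OF pr2_hom[OF A B] g] ab])
  also have "\<dots> = tup C (cmp C f a) (cmp C g b)"
    using cmp_assoc[OF ab pr1_hom[OF A B] f, symmetric] cmp_assoc[OF ab pr2_hom[OF A B] g, symmetric]
      pr1_tup[OF a b] pr2_tup[OF a b] by simp
  finally show ?thesis .
qed

lemma diag_hom: "A \<in> Ob C \<Longrightarrow> diag C A \<in> Hom C A (prd C A A)"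
  unfolding diag_def by (intro tup_hom idt_hom)

lemma diag_comp:
  assumes f: "f \<in> Hom C A B"
  shows "cmp C (diag C B) f = tup C f f"
proof -
  have B: "B \<in> Ob C" using f hom_obs by blast
  show ?thesis
    unfolding diag_def using tup_comp[OF idt_hom[OF B] idt_hom[OF B] f] idt_cmp[OF f] by simp
qed

lemma fprod_diag:
  assumes a: "a \<in> Hom C Y A" and b: "b \<in> Hom C Y B"
  shows "cmp C (fprod C Y Y a b) (diag C Y) = tup C a b"
proof -
  have Y: "Y \<in> Ob C" using a hom_obs by blast
  show ?thesis
    unfolding diag_def using fprod_tup[OF a b idt_hom[OF Y] idt_hom[OF Y]] cmp_idt[OF a] cmp_idt[OF b]
    by simp
qed

lemma opow_ob: "X \<in> Ob C \<Longrightarrow> opow C X n \<in> Ob C"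
  by (induction n) (auto simp: one_ob prd_ob)

lemma ndiag_hom: "X \<in> Ob C \<Longrightarrow> ndiag C X n \<in> Hom C X (opow C X n)"
  by (induction n) (auto simp: bang_hom intro: tup_hom idt_hom)

end

locale commutative_monad = cartesian_category +
  fixes M :: "('o, 'm) cmonad"
  assumes commutative: "is_commutative_monad C M"
begin

lemma monad: "is_monad C M"
  using commutative unfolding is_commutative_monad_def by (elim conjE)

lemma Tob_ob: "A \<in> Ob C \<Longrightarrow> Tob M A \<in> Ob C"
  using monad unfolding is_monad_def by (elim conjE) blast

lemma Tar_hom: "f \<in> Hom C A B \<Longrightarrow> Tar M f \<in> Hom C (Tob M A) (Tob M B)"
  using monad unfolding is_monad_def by (elim conjE) blast

lemma Tar_idt: "A \<in> Ob C \<Longrightarrow> Tar M (idt C A) = idt C (Tob M A)"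
  using monad unfolding is_monad_def by (elim conjE) blast

lemma Tar_cmp: "f \<in> Hom C A B \<Longrightarrow> g \<in> Hom C B E \<Longrightarrow>
    Tar M (cmp C g f) = cmp C (Tar M g) (Tar M f)"
  using monad unfolding is_monad_def by (elim conjE) blast

lemma eta_hom: "A \<in> Ob C \<Longrightarrow> eta M A \<in> Hom C A (Tob M A)"
  using monad unfolding is_monad_def by (elim conjE) blast

lemma mu_hom: "A \<in> Ob C \<Longrightarrow> mu M A \<in> Hom C (Tob M (Tob M A)) (Tob M A)"
  using monad unfolding is_monad_def by (elim conjE) blast

lemma eta_natural: "f \<in> Hom C A B \<Longrightarrow> cmp C (Tar M f) (eta M A) = cmp C (eta M B) f"
  using monad unfolding is_monad_def by (elim conjE) blast

lemma mu_eta: "A \<in> Ob C \<Longrightarrow> cmp C (mu M A) (eta M (Tob M A)) = idt C (Tob M A)"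
  using monad unfolding is_monad_def by (elim conjE) blast

lemma mu_Tar_eta: "A \<in> Ob C \<Longrightarrow> cmp C (mu M A) (Tar M (eta M A)) = idt C (Tob M A)"
  using monad unfolding is_monad_def by (elim conjE) blast

lemma nabla_hom: "A \<in> Ob C \<Longrightarrow> B \<in> Ob C \<Longrightarrow>
    nabla M A B \<in> Hom C (prd C (Tob M A) (Tob M B)) (Tob M (prd C A B))"
  using commutative unfolding is_commutative_monad_def by (elim conjE) blast

lemma nabla_natural: "f \<in> Hom C A A' \<Longrightarrow> g \<in> Hom C B B' \<Longrightarrow>
    cmp C (Tar M (fprod C A B f g)) (nabla M A B) =
    cmp C (nabla M A' B') (fprod C (Tob M A) (Tob M B) (Tar M f) (Tar M g))"
  using commutative unfolding is_commutative_monad_def by (elim conjE) blast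

lemma nabla_eta: "A \<in> Ob C \<Longrightarrow> B \<in> Ob C \<Longrightarrow>
    cmp C (nabla M A B) (fprod C A B (eta M A) (eta M B)) = eta M (prd C A B)"
  using commutative unfolding is_commutative_monad_def by (elim conjE) blast

lemma kcomp_eta_right:
  assumes g: "g \<in> Hom C B (Tob M E)" and f: "f \<in> Hom C A B" and E: "E \<in> Ob C"
  shows "kcomp C M E g (cmp C (eta M B) f) = cmp C g f"
proof -
  have B: "B \<in> Ob C" using g hom_obs by blast
  have TE: "Tob M E \<in> Ob C" using Tob_ob[OF E] .
  have gf: "cmp C g f \<in> Hom C A (Tob M E)" using cmp_hom[OF f g] .
  have "cmp C (Tar M g) (cmp C (eta M B) f) = cmp C (cmp C (Tar M g) (eta M B)) f"
    using cmp_assoc[OF f eta_hom[OF B] Tar_hom[OF g]] .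
  also have "\<dots> = cmp C (eta M (Tob M E)) (cmp C g f)"
    using eta_natural[OF g] cmp_assoc[OF f g eta_hom[OF TE]] by simp
  finally have "kcomp C M E g (cmp C (eta M B) f) =
      cmp C (cmp C (mu M E) (eta M (Tob M E))) (cmp C g f)"
    unfolding kcomp_def using cmp_assoc[OF gf eta_hom[OF TE] mu_hom[OF E]] by simp
  then show ?thesis using mu_eta[OF E] idt_cmp[OF gf] by simp
qed

lemma kcomp_eta_left:
  assumes f: "f \<in> Hom C A (Tob M B)" and g: "g \<in> Hom C B E"
  shows "kcomp C M E (cmp C (eta M E) g) f = cmp C (Tar M g) f"
proof -
  have E: "E \<in> Ob C" using g hom_obs by blast
  have Tg: "Tar M g \<in> Hom C (Tob M B) (Tob M E)" using Tar_hom[OF g] .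
  have Te: "Tar M (eta M E) \<in> Hom C (Tob M E) (Tob M (Tob M E))"
    using Tar_hom[OF eta_hom[OF E]] .
  have "kcomp C M E (cmp C (eta M E) g) f =
      cmp C (mu M E) (cmp C (Tar M (eta M E)) (cmp C (Tar M g) f))"
    unfolding kcomp_def using Tar_cmp[OF g eta_hom[OF E]] cmp_assoc[OF f Tg Te] by simp
  also have "\<dots> = cmp C (cmp C (mu M E) (Tar M (eta M E))) (cmp C (Tar M g) f)"
    using cmp_assoc[OF cmp_hom[OF f Tg] Te mu_hom[OF E]] .
  also have "\<dots> = cmp C (Tar M g) f"
    using mu_Tar_eta[OF E] idt_cmp[OF cmp_hom[OF f Tg]] by simp
  finally show ?thesis .
qed

lemma kcomp_Tar_right:
  assumes f: "f \<in> Hom C A (Tob M B)" and h: "h \<in> Hom C B B'" and g: "g \<in> Hom C B' (Tob M E)"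
  shows "kcomp C M E g (cmp C (Tar M h) f) = kcomp C M E (cmp C g h) f"
  unfolding kcomp_def using cmp_assoc[OF f Tar_hom[OF h] Tar_hom[OF g]] Tar_cmp[OF h g] by simp

lemma nabla_tup_eta:
  assumes a: "a \<in> Hom C Z A" and b: "b \<in> Hom C Z B"
  shows "cmp C (nabla M A B) (tup C (cmp C (eta M A) a) (cmp C (eta M B) b)) =
    cmp C (eta M (prd C A B)) (tup C a b)"
proof -
  have A: "A \<in> Ob C" and B: "B \<in> Ob C" using a b hom_obs by blast+
  have etas: "fprod C A B (eta M A) (eta M B) \<in> Hom C (prd C A B) (prd C (Tob M A) (Tob M B))"
    using fprod_hom[OF eta_hom[OF A] eta_hom[OF B]] .
  have "tup C (cmp C (eta M A) a) (cmp C (eta M B) b) =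
      cmp C (fprod C A B (eta M A) (eta M B)) (tup C a b)"
    using fprod_tup[OF eta_hom[OF A] eta_hom[OF B] a b] by simp
  then show ?thesis
    using cmp_assoc[OF tup_hom[OF a b] etas nabla_hom[OF A B]] nabla_eta[OF A B] by simp
qed

lemma deterministic_iff:
  assumes f: "f \<in> Hom C X (Tob M Y)" and Y: "Y \<in> Ob C"
  shows "deterministic C M X Y f \<longleftrightarrow>
    cmp C (Tar M (diag C Y)) f = cmp C (nabla M Y Y) (tup C f f) \<and>
    cmp C (Tar M (bang C Y)) f = cmp C (eta M (one C)) (bang C X)"
proof -
  have X: "X \<in> Ob C" using f hom_obs by blast
  have ff: "fprod C X X f f \<in> Hom C (prd C X X) (prd C (Tob M Y) (Tob M Y))"
    using fprod_hom[OF f f] .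
  have kt: "ktensor C M X X Y Y f f \<in> Hom C (prd C X X) (Tob M (prd C Y Y))"
    unfolding ktensor_def using cmp_hom[OF ff nabla_hom[OF Y Y]] .
  have "kcomp C M (prd C Y Y) (ktensor C M X X Y Y f f) (kcopy C M X) =
      cmp C (ktensor C M X X Y Y f f) (diag C X)"
    unfolding kcopy_def using kcomp_eta_right[OF kt diag_hom[OF X] prd_ob[OF Y Y]] .
  also have "\<dots> = cmp C (nabla M Y Y) (tup C f f)"
    unfolding ktensor_def
    using cmp_assoc[OF diag_hom[OF X] ff nabla_hom[OF Y Y]] fprod_diag[OF f f] by simp
  finally show ?thesis
    unfolding deterministic_def kcopy_def kdel_def
    using kcomp_eta_left[OF f diag_hom[OF Y]] kcomp_eta_left[OF f bang_hom[OF Y]] by simp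
qed

lemma equalizing_cmp_eq_Tar:
  assumes f: "f \<in> Hom C X (Tob M Y)"
    and equalizes: "cmp C (eta M (Tob M Y)) f = cmp C (Tar M (eta M Y)) f"
    and H: "H \<in> Hom C (Tob M Y) (Tob M Z)" and g: "g \<in> Hom C Y Z"
    and H_eta: "cmp C H (eta M Y) = cmp C (eta M Z) g"
  shows "cmp C H f = cmp C (Tar M g) f"
proof -
  have Y: "Y \<in> Ob C" and Z: "Z \<in> Ob C" using g hom_obs by blast+
  have "cmp C H f = kcomp C M Z H (cmp C (eta M (Tob M Y)) f)"
    using kcomp_eta_right[OF H f Z] by simp
  also have "\<dots> = kcomp C M Z H (cmp C (Tar M (eta M Y)) f)"
    using equalizes by simp
  also have "\<dots> = kcomp C M Z (cmp C (eta M Z) g) f"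
    using kcomp_Tar_right[OF f eta_hom[OF Y] H] H_eta by simp
  also have "\<dots> = cmp C (Tar M g) f"
    using kcomp_eta_left[OF f g] .
  finally show ?thesis .
qed

lemma equalizing_imp_deterministic:
  assumes f: "f \<in> Hom C X (Tob M Y)" and Y: "Y \<in> Ob C"
    and equalizes: "cmp C (eta M (Tob M Y)) f = cmp C (Tar M (eta M Y)) f"
  shows "deterministic C M X Y f"
proof -
  have TY: "Tob M Y \<in> Ob C" using Tob_ob[OF Y] .
  have eY: "eta M Y \<in> Hom C Y (Tob M Y)" using eta_hom[OF Y] .
  define H where "H = cmp C (nabla M Y Y) (diag C (Tob M Y))"
  have H: "H \<in> Hom C (Tob M Y) (Tob M (prd C Y Y))"
    unfolding H_def using cmp_hom[OF diag_hom[OF TY] nabla_hom[OF Y Y]] .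
  have H_cmp: "cmp C H h = cmp C (nabla M Y Y) (tup C h h)" if h: "h \<in> Hom C W (Tob M Y)" for W h
    unfolding H_def using cmp_assoc[OF h diag_hom[OF TY] nabla_hom[OF Y Y]] diag_comp[OF h]
    by simp
  have "cmp C H (eta M Y) = cmp C (eta M (prd C Y Y)) (diag C Y)"
    unfolding H_cmp[OF eY] diag_def
    using nabla_tup_eta[OF idt_hom[OF Y] idt_hom[OF Y]] cmp_idt[OF eY] by simp
  then have copy: "cmp C (Tar M (diag C Y)) f = cmp C (nabla M Y Y) (tup C f f)"
    using equalizing_cmp_eq_Tar[OF f equalizes H diag_hom[OF Y]] H_cmp[OF f] by simp
  define K where "K = cmp C (eta M (one C)) (bang C (Tob M Y))"
  have K: "K \<in> Hom C (Tob M Y) (Tob M (one C))"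
    unfolding K_def using cmp_hom[OF bang_hom[OF TY] eta_hom[OF one_ob]] .
  have K_cmp: "cmp C K h = cmp C (eta M (one C)) (bang C W)" if h: "h \<in> Hom C W (Tob M Y)" for W h
    unfolding K_def using cmp_assoc[OF h bang_hom[OF TY] eta_hom[OF one_ob]]
      bang_unique[OF cmp_hom[OF h bang_hom[OF TY]]] by simp
  have del: "cmp C (Tar M (bang C Y)) f = cmp C (eta M (one C)) (bang C X)"
    using equalizing_cmp_eq_Tar[OF f equalizes K bang_hom[OF Y] K_cmp[OF eY]] K_cmp[OF f] by simp
  show ?thesis using deterministic_iff[OF f Y] copy del by simp
qed

lemma eta_deterministic:
  assumes Y: "Y \<in> Ob C"
  shows "deterministic C M Y Y (eta M Y)"
  using equalizing_imp_deterministic[OF eta_hom[OF Y] Y eta_natural[OF eta_hom[OF Y], symmetric]] .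

lemma Tar_tup_cmp_deterministic:
  assumes g: "g \<in> Hom C Z (Tob M Y)" and det: "deterministic C M Z Y g"
    and a: "a \<in> Hom C Y A" and b: "b \<in> Hom C Y B"
  shows "cmp C (Tar M (tup C a b)) g =
    cmp C (nabla M A B) (tup C (cmp C (Tar M a) g) (cmp C (Tar M b) g))"
proof -
  have Y: "Y \<in> Ob C" and A: "A \<in> Ob C" and B: "B \<in> Ob C" using a b hom_obs by blast+
  have ab: "fprod C Y Y a b \<in> Hom C (prd C Y Y) (prd C A B)" using fprod_hom[OF a b] .
  have Tab: "Tar M (fprod C Y Y a b) \<in> Hom C (Tob M (prd C Y Y)) (Tob M (prd C A B))"
    using Tar_hom[OF ab] .
  have Tab': "fprod C (Tob M Y) (Tob M Y) (Tar M a) (Tar M b)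
      \<in> Hom C (prd C (Tob M Y) (Tob M Y)) (prd C (Tob M A) (Tob M B))"
    using fprod_hom[OF Tar_hom[OF a] Tar_hom[OF b]] .
  have gg: "tup C g g \<in> Hom C Z (prd C (Tob M Y) (Tob M Y))" using tup_hom[OF g g] .
  have "cmp C (Tar M (tup C a b)) g =
      cmp C (Tar M (fprod C Y Y a b)) (cmp C (Tar M (diag C Y)) g)"
    using fprod_diag[OF a b] Tar_cmp[OF diag_hom[OF Y] ab]
      cmp_assoc[OF g Tar_hom[OF diag_hom[OF Y]] Tab] by simp
  also have "\<dots> = cmp C (cmp C (Tar M (fprod C Y Y a b)) (nabla M Y Y)) (tup C g g)"
    using deterministic_iff[OF g Y] det cmp_assoc[OF gg nabla_hom[OF Y Y] Tab] by simp
  also have "\<dots> = cmp C (nabla M A B)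
      (cmp C (fprod C (Tob M Y) (Tob M Y) (Tar M a) (Tar M b)) (tup C g g))"
    using nabla_natural[OF a b] cmp_assoc[OF gg Tab' nabla_hom[OF A B]] by simp
  also have "\<dots> = cmp C (nabla M A B) (tup C (cmp C (Tar M a) g) (cmp C (Tar M b) g))"
    using fprod_tup[OF Tar_hom[OF a] Tar_hom[OF b] g g] by simp
  finally show ?thesis .
qed

lemma kforce_pow_hom:
  assumes X: "X \<in> Ob C"
  shows "kforce_pow C M X n \<in> Hom C (opow C (Tob M X) n) (Tob M (opow C X n))"
proof (induction n)
  case 0
  show ?case using eta_hom[OF one_ob] by simp
next
  case (Suc n)
  have "kforce C M X \<in> Hom C (Tob M X) (Tob M X)"
    unfolding kforce_def using idt_hom[OF Tob_ob[OF X]] .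
  then show ?case
    unfolding kforce_pow.simps ktensor_def opow.simps
    using cmp_hom[OF fprod_hom[OF Suc] nabla_hom[OF opow_ob[OF X] X]] by blast
qed

lemma samp_eq:
  assumes X: "X \<in> Ob C"
  shows "samp C M X n = cmp C (kforce_pow C M X n) (ndiag C (Tob M X) n)"
  unfolding samp_def kcopy_n_def
  using kcomp_eta_right[OF kforce_pow_hom[OF X] ndiag_hom[OF Tob_ob[OF X]] opow_ob[OF X]] .

lemma samp_hom: "X \<in> Ob C \<Longrightarrow> samp C M X n \<in> Hom C (Tob M X) (Tob M (opow C X n))"
  unfolding samp_eq using cmp_hom[OF ndiag_hom[OF Tob_ob] kforce_pow_hom] by blast

lemma kforce_pow_ndiag_cmp_deterministic:
  assumes g: "g \<in> Hom C Z (Tob M Y)" and Y: "Y \<in> Ob C" and det: "deterministic C M Z Y g"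
  shows "cmp C (kforce_pow C M Y n) (cmp C (ndiag C (Tob M Y) n) g) =
    cmp C (Tar M (ndiag C Y n)) g"
proof (induction n)
  case 0
  have TY: "Tob M Y \<in> Ob C" using Tob_ob[OF Y] .
  have "cmp C (bang C (Tob M Y)) g = bang C Z"
    using bang_unique[OF cmp_hom[OF g bang_hom[OF TY]]] .
  then show ?case using det deterministic_iff[OF g Y] by simp
next
  case (Suc n)
  have TY: "Tob M Y \<in> Ob C" using Tob_ob[OF Y] .
  have pow: "kforce_pow C M Y n \<in> Hom C (opow C (Tob M Y) n) (Tob M (opow C Y n))"
    using kforce_pow_hom[OF Y] .
  have dg: "cmp C (ndiag C (Tob M Y) n) g \<in> Hom C Z (opow C (Tob M Y) n)"
    using cmp_hom[OF g ndiag_hom[OF TY]] .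
  have pow_id: "fprod C (opow C (Tob M Y) n) (Tob M Y) (kforce_pow C M Y n) (idt C (Tob M Y))
      \<in> Hom C (prd C (opow C (Tob M Y) n) (Tob M Y)) (prd C (Tob M (opow C Y n)) (Tob M Y))"
    using fprod_hom[OF pow idt_hom[OF TY]] .
  have "cmp C (kforce_pow C M Y (Suc n)) (cmp C (ndiag C (Tob M Y) (Suc n)) g) =
      cmp C (nabla M (opow C Y n) Y) (cmp C
        (fprod C (opow C (Tob M Y) n) (Tob M Y) (kforce_pow C M Y n) (idt C (Tob M Y)))
        (tup C (cmp C (ndiag C (Tob M Y) n) g) g))"
    unfolding kforce_pow.simps ktensor_def kforce_def ndiag.simps
    using tup_comp[OF ndiag_hom[OF TY] idt_hom[OF TY] g] idt_cmp[OF g]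
      cmp_assoc[OF tup_hom[OF dg g] pow_id nabla_hom[OF opow_ob[OF Y] Y]] by simp
  also have "\<dots> = cmp C (nabla M (opow C Y n) Y) (tup C (cmp C (Tar M (ndiag C Y n)) g) g)"
    using fprod_tup[OF pow idt_hom[OF TY] dg g] idt_cmp[OF g] Suc by simp
  also have "\<dots> = cmp C (Tar M (ndiag C Y (Suc n))) g"
    using Tar_tup_cmp_deterministic[OF g det ndiag_hom[OF Y] idt_hom[OF Y]]
      Tar_idt[OF Y] idt_cmp[OF g] by simp
  finally show ?case .
qed

lemma samp_cmp_deterministic:
  assumes g: "g \<in> Hom C Z (Tob M Y)" and Y: "Y \<in> Ob C" and det: "deterministic C M Z Y g"
  shows "cmp C (samp C M Y n) g = cmp C (Tar M (ndiag C Y n)) g"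
  using samp_eq[OF Y] kforce_pow_ndiag_cmp_deterministic[OF g Y det]
    cmp_assoc[OF g ndiag_hom[OF Tob_ob[OF Y]] kforce_pow_hom[OF Y]] by simp

lemma deterministic_imp_equalizing:
  assumes obs: "observational C M"
    and f: "f \<in> Hom C X (Tob M Y)" and Y: "Y \<in> Ob C" and det: "deterministic C M X Y f"
  shows "cmp C (eta M (Tob M Y)) f = cmp C (Tar M (eta M Y)) f"
proof -
  have X: "X \<in> Ob C" and TY: "Tob M Y \<in> Ob C" using f hom_obs by blast+
  have eY: "eta M Y \<in> Hom C Y (Tob M Y)" using eta_hom[OF Y] .
  have "kcomp C M (opow C Y n) (samp C M Y n) (cmp C (eta M (Tob M Y)) f) =
      kcomp C M (opow C Y n) (samp C M Y n) (cmp C (Tar M (eta M Y)) f)" for n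
  proof -
    have "kcomp C M (opow C Y n) (samp C M Y n) (cmp C (eta M (Tob M Y)) f) =
        cmp C (Tar M (ndiag C Y n)) f"
      using kcomp_eta_right[OF samp_hom[OF Y] f opow_ob[OF Y]] samp_cmp_deterministic[OF f Y det]
      by simp
    moreover have "kcomp C M (opow C Y n) (samp C M Y n) (cmp C (Tar M (eta M Y)) f) =
        kcomp C M (opow C Y n) (cmp C (eta M (opow C Y n)) (ndiag C Y n)) f"
      using kcomp_Tar_right[OF f eY samp_hom[OF Y]]
        samp_cmp_deterministic[OF eY Y eta_deterministic[OF Y]] eta_natural[OF ndiag_hom[OF Y]]
      by simp
    ultimately show ?thesis using kcomp_eta_left[OF f ndiag_hom[OF Y]] by simp
  qed
  then show ?thesis
    using obs X Y cmp_hom[OF f eta_hom[OF TY]] cmp_hom[OF f Tar_hom[OF eY]]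
    unfolding observational_def by blast
qed

lemma deterministic_iff_equalizing:
  assumes "observational C M" and "f \<in> Hom C X (Tob M Y)" and "Y \<in> Ob C"
  shows "deterministic C M X Y f \<longleftrightarrow> cmp C (eta M (Tob M Y)) f = cmp C (Tar M (eta M Y)) f"
  using deterministic_imp_equalizing[OF assms] equalizing_imp_deterministic[OF assms(2,3)] by blast

end

theorem corollary7p2:
  fixes C :: "('o, 'm) cartcat" and M :: "('o, 'm) cmonad"
    and D :: "'o \<Rightarrow> 'o" and \<theta> :: "'o \<Rightarrow> 'm"
  assumes "is_cartesian_category C"
    and "is_commutative_monad C M"
    and "observational C M"
    and "\<forall>Y\<in>Ob C. is_equalizer C (Tob M Y) (Tob M (Tob M Y))
            (eta M (Tob M Y)) (Tar M (eta M Y)) (D Y) (\<theta> Y)"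
    and "X \<in> Ob C" and "Y \<in> Ob C"
  shows "bij_betw (\<lambda>h. cmp C (\<theta> Y) h) (Hom C X (D Y))
           {f \<in> Hom C X (Tob M Y). deterministic C M X Y f}"
proof -
  interpret commutative_monad C M
    using assms(1,2) by unfold_locales (simp_all add: is_cartesian_category_def)
  have "{f \<in> Hom C X (Tob M Y). deterministic C M X Y f} =
      {f \<in> Hom C X (Tob M Y). cmp C (eta M (Tob M Y)) f = cmp C (Tar M (eta M Y)) f}"
    using deterministic_iff_equalizing[OF assms(3) _ assms(6)] by blast
  moreover have "is_equalizer C (Tob M Y) (Tob M (Tob M Y))
      (eta M (Tob M Y)) (Tar M (eta M Y)) (D Y) (\<theta> Y)"
    using assms(4,6) by blast
  ultimately show ?thesis
    using bij_betw_equalizer eta_hom[OF Tob_ob[OF assms(6)]] Tar_hom[OF eta_hom[OF assms(6)]]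
    by simp
qed

end
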